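(* Let $S>0$, $I\ge1$, $N_1,\dots,N_I$ positive integers and $\theta_1>\dots>\theta_I>0$. Let $\lambda(k)=\Big(\frac{\sum_{i=1}^k N_i\sqrt{\theta_i}}{S+\sum_{i=1}^k N_i}\Big)^2$, $K=\max\{k\in\{1,\dots,I\}:\theta_k>\lambda(k)\}$, $\lambda^*=\lambda(K)$, and for $i\le K$ let $p^*_i=\sqrt{\theta_i\lambda^*}$ and $s^*_i=\sqrt{\theta_i/\lambda^*}-1$ (the optimal complete-information differentiated prices and allocations). For each $q\in\{1,\dots,K-1\}$ the equation $$t^2\ln t-(t^2-1)+\frac{t\sum_{k=1}^{q}N_k+N_{q+1}}{S+\sum_{k=1}^{K}N_k}(t-1)=0$$ has a unique solution $t_q$ in $t>1$. Moreover, if $\sqrt{\theta_q/\theta_{q+1}}\ge t_q$ for all $q=1,\dots,K-1$, then there exist quantity thresholds $s^1_{th}>s^2_{th}>\dots>s^{K-1}_{th}>0$ such that, under the quantity-based price menu $p(s)=p^*_q$ for $s^q_{th}<s\le s^{q-1}_{th}$ ($q=1,\dots,K$, with $s^0_{th}=+\infty$, $s^K_{th}=0$), for every $i\in\{1,\dots,K\}$ the quantity $s^*_i$ maximizes a group-$i$ user's surplus $\theta_i\ln(1+s)-p(s)s$ over $s\ge0$ (with surplus $0$ at $s=0$) and is charged unit price $p(s^*_i)=p^*_i$; consequently the menu attains the same revenue $\sum_{i=1}^K N_ip^*_is^*_i$ as optimal complete price differentiation under complete information.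
   Context: Group $i$ consists of $N_i$ users, each with utility $\theta_i\ln(1+s)$. Under incomplete information the provider (with total resource $S$) does not know which group each user belongs to; it publishes one menu in which the unit price depends on the purchased quantity, and each user freely chooses a quantity to maximize utility minus payment $p(s)s$. *)

theory Defs
  imports Complex_Main
begin

text \<open>Groups are indexed 1..I; N i is the number of users of group i, th i = theta_i.\<close>

definition lam :: "real \<Rightarrow> (nat \<Rightarrow> nat) \<Rightarrow> (nat \<Rightarrow> real) \<Rightarrow> nat \<Rightarrow> real" where
  "lam S N th k = ((\<Sum>i=1..k. real (N i) * sqrt (th i)) / (S + (\<Sum>i=1..k. real (N i)))) ^ 2"

definition effK :: "real \<Rightarrow> nat \<Rightarrow> (nat \<Rightarrow> nat) \<Rightarrow> (nat \<Rightarrow> real) \<Rightarrow> nat" where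
  "effK S I N th = Max {k \<in> {1..I}. th k > lam S N th k}"

definition lamstar :: "real \<Rightarrow> nat \<Rightarrow> (nat \<Rightarrow> nat) \<Rightarrow> (nat \<Rightarrow> real) \<Rightarrow> real" where
  "lamstar S I N th = lam S N th (effK S I N th)"

definition pstar :: "real \<Rightarrow> nat \<Rightarrow> (nat \<Rightarrow> nat) \<Rightarrow> (nat \<Rightarrow> real) \<Rightarrow> nat \<Rightarrow> real" where
  "pstar S I N th i = sqrt (th i * lamstar S I N th)"

definition sstar :: "real \<Rightarrow> nat \<Rightarrow> (nat \<Rightarrow> nat) \<Rightarrow> (nat \<Rightarrow> real) \<Rightarrow> nat \<Rightarrow> real" where
  "sstar S I N th i = sqrt (th i / lamstar S I N th) - 1"

definition threq :: "real \<Rightarrow> (nat \<Rightarrow> nat) \<Rightarrow> nat \<Rightarrow> nat \<Rightarrow> real \<Rightarrow> real" where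
  "threq S N K q t = t^2 * ln t - (t^2 - 1)
     + (t * (\<Sum>k=1..q. real (N k)) + real (N (q+1))) / (S + (\<Sum>k=1..K. real (N k))) * (t - 1)"

definition tq :: "real \<Rightarrow> (nat \<Rightarrow> nat) \<Rightarrow> nat \<Rightarrow> nat \<Rightarrow> real" where
  "tq S N K q = (THE t. t > 1 \<and> threq S N K q t = 0)"

text \<open>Quantity-based price menu: thresholds sth 1 > ... > sth (K-1) > 0, with
  sth 0 = +infinity and sth K = 0; for s^q_th < s \<le> s^(q-1)_th the unit price is price q.
  At s = 0 the payment p(s)*s is 0 whatever value is returned.\<close>
definition menu_price :: "nat \<Rightarrow> (nat \<Rightarrow> real) \<Rightarrow> (nat \<Rightarrow> real) \<Rightarrow> real \<Rightarrow> real" where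
  "menu_price K sth price s =
     price (THE q. q \<in> {1..K} \<and> (q = K \<or> sth q < s) \<and> (q = 1 \<or> s \<le> sth (q - 1)))"

definition surplus :: "real \<Rightarrow> (real \<Rightarrow> real) \<Rightarrow> real \<Rightarrow> real" where
  "surplus thi p s = thi * ln (1 + s) - p s * s"

end

theory Submission
  imports Defs
begin

text \<open>Write \<lambda> = \<lambda>* and x i = sqrt (\<theta>_i / \<lambda>) = 1 + s*_i, so that \<theta>_i = \<lambda> (x i)^2 and
  p*_i = \<lambda> x i, and let band q of the menu be (x (q+1) - 1, x q - 1] with unit price \<lambda> x q.
  A group-i user buying in a band j \<le> i pays at least \<lambda> x i per unit, and by concavity of ln the
  surplus \<theta>_i ln(1 + s) - \<lambda> x i s is maximal at s = x i - 1. In a cheaper band j > i the surplus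
  grows up to the top x j - 1 of the band, and after the substitution t = x i / x j the comparison
  with s*_i becomes nonnegativity of t^2 ln t - (t^2 - 1) + c (t - 1) with c = 1 / x j. For c \<in> [0, 1)
  this function vanishes at 1, is convex on [1, \<infinity>) with negative slope at 1, hence has a single
  root t > 1 and is nonnegative beyond it. The capacity identity \<Sum> N_k x k = S + \<Sum> N_k bounds c
  from below by the coefficient of the threshold equation for q = j - 1, so the hypothesis
  sqrt (\<theta>_q / \<theta>_(q+1)) \<ge> t_q suffices.\<close>

section \<open>The threshold function\<close>

definition threshold_fun :: "real \<Rightarrow> real \<Rightarrow> real \<Rightarrow> real" where
  "threshold_fun a b t = t^2 * ln t - (t^2 - 1) + (a*t + b) * (t - 1)"

lemma threshold_fun_one [simp]: "threshold_fun a b 1 = 0"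
  by (simp add: threshold_fun_def)

lemma has_real_derivative_threshold_fun:
  "t > 0 \<Longrightarrow> (threshold_fun a b has_real_derivative 2*t*ln t - t + 2*a*t - a + b) (at t)"
  unfolding threshold_fun_def
  by (auto intro!: derivative_eq_intros simp: field_simps power2_eq_square)

lemma isCont_threshold_fun: "t > 0 \<Longrightarrow> isCont (threshold_fun a b) t"
  using has_real_derivative_threshold_fun DERIV_isCont by blast

lemma threshold_fun_root_between:
  assumes "0 < u" "u \<le> v"
    and "threshold_fun a b u \<le> 0 \<and> 0 \<le> threshold_fun a b v
       \<or> threshold_fun a b v \<le> 0 \<and> 0 \<le> threshold_fun a b u"
  obtains r where "u \<le> r" "r \<le> v" "threshold_fun a b r = 0"
proof -
  have "\<forall>t. u \<le> t \<and> t \<le> v \<longrightarrow> isCont (threshold_fun a b) t"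
    using assms(1) isCont_threshold_fun by auto
  thus ?thesis using IVT[of "threshold_fun a b" u 0 v] IVT2[of "threshold_fun a b" v 0 u]
    assms(2,3) that by blast
qed

text \<open>The second derivative 2 ln t + 1 + 2a is positive on (1, \<infinity>), so together with the root
  at t = 1 Rolle's theorem (applied twice) excludes two further roots.\<close>
lemma threshold_fun_no_two_roots:
  assumes "a \<ge> 0" "1 < u" "u < v" "threshold_fun a b u = 0" "threshold_fun a b v = 0"
  shows False
proof -
  define f where "f = threshold_fun a b"
  define f' where "f' = (\<lambda>t. 2*t*ln t - t + 2*a*t - a + b)"
  have f': "\<And>t. t > 0 \<Longrightarrow> (f has_real_derivative f' t) (at t)"
    unfolding f_def f'_def by (rule has_real_derivative_threshold_fun)
  obtain z1 where z1: "1 < z1" "z1 < u" "f u - f 1 = (u - 1) * f' z1"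
    using MVT2[of 1 u f f'] assms f' by force
  obtain z2 where z2: "u < z2" "z2 < v" "f v - f u = (v - u) * f' z2"
    using MVT2[of u v f f'] assms f' by force
  have f'': "(f' has_real_derivative 2*ln t + 1 + 2*a) (at t)" if "t > 0" for t
    unfolding f'_def using that by (auto intro!: derivative_eq_intros simp: field_simps)
  obtain z3 where z3: "z1 < z3" "f' z2 - f' z1 = (z2 - z1) * (2*ln z3 + 1 + 2*a)"
    using MVT2[of z1 z2 f' "\<lambda>t. 2*ln t + 1 + 2*a"] z1 z2 f'' by force
  have "f' z1 = 0" "f' z2 = 0" using z1 z2 assms unfolding f_def by simp_all
  hence "2*ln z3 + 1 + 2*a = 0" using z1 z2 z3 by simp
  moreover have "ln z3 > 0" using z1 z3 by simp
  ultimately show False using assms(1) by linarith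
qed

lemma threshold_fun_pos_large:
  assumes "a \<ge> 0" "b \<ge> 0" "t \<ge> exp 1"
  shows "threshold_fun a b t > 0"
proof -
  have "t > 1" using assms(3) one_less_exp_iff[of 1] by linarith
  have "ln t \<ge> 1" using assms(3) \<open>t > 1\<close> by (simp add: ln_ge_iff)
  hence "t^2 * ln t \<ge> t^2" using mult_left_mono[of 1 "ln t" "t^2"] by simp
  moreover have "(a*t + b) * (t - 1) \<ge> 0" using assms \<open>t > 1\<close> by simp
  ultimately show ?thesis unfolding threshold_fun_def by simp
qed

text \<open>The slope at t = 1 is a + b - 1 < 0 and the function is positive from e on.\<close>
lemma threshold_fun_root_exists:
  assumes "a \<ge> 0" "b \<ge> 0" "a + b < 1"
  shows "\<exists>t>1. threshold_fun a b t = 0"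
proof -
  have "2*1*ln 1 - 1 + 2*a*1 - a + b < (0::real)" using assms(3) by simp
  from DERIV_neg_dec_right[OF has_real_derivative_threshold_fun this]
  obtain d where d: "d > 0" "\<And>h. h > 0 \<Longrightarrow> h < d \<Longrightarrow> threshold_fun a b (1 + h) < 0"
    by auto
  define h where "h = min (d/2) (1/2)"
  have "exp (1::real) \<ge> 2" using exp_ge_add_one_self[of "1::real"] by simp
  hence h: "h > 0" "h < d" "1 + h \<le> exp 1" using d(1) unfolding h_def by auto
  obtain t where "1 + h \<le> t" "threshold_fun a b t = 0"
  proof (rule threshold_fun_root_between[of "1 + h" "exp 1" a b])
    show "threshold_fun a b (1 + h) \<le> 0 \<and> 0 \<le> threshold_fun a b (exp 1)
      \<or> threshold_fun a b (exp 1) \<le> 0 \<and> 0 \<le> threshold_fun a b (1 + h)"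
      using d(2)[OF h(1,2)] threshold_fun_pos_large[OF assms(1,2), of "exp 1"] by simp
  qed (use h in auto)
  thus ?thesis using h(1) by (intro exI[of _ t]) auto
qed

lemma threshold_fun_unique_root:
  assumes "a \<ge> 0" "b \<ge> 0" "a + b < 1"
  shows "\<exists>!t. t > 1 \<and> threshold_fun a b t = 0"
  using threshold_fun_root_exists[OF assms] threshold_fun_no_two_roots[OF assms(1)]
  by (metis linorder_neqE_linordered_idom)

lemma threshold_fun_nonneg_beyond:
  assumes "a \<ge> 0" "b \<ge> 0" "1 < t0" "t0 \<le> t" "threshold_fun a b t0 \<ge> 0"
  shows "threshold_fun a b t \<ge> 0"
proof (rule ccontr)
  assume neg: "\<not> threshold_fun a b t \<ge> 0"
  have "t < exp 1" using threshold_fun_pos_large[OF assms(1,2), of t] neg by force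
  then obtain r where r: "t \<le> r" "threshold_fun a b r = 0"
    using threshold_fun_root_between[of t "exp 1" a b] neg assms(3,4)
      threshold_fun_pos_large[OF assms(1,2), of "exp 1"] by force
  obtain r' where r': "t0 \<le> r'" "r' \<le> t" "threshold_fun a b r' = 0"
    using threshold_fun_root_between[of t0 t a b] neg assms(3,4,5) by force
  have "r' < r" using r r' neg by (cases "r' = t"; cases "r = t") auto
  thus False using threshold_fun_no_two_roots[OF assms(1) _ \<open>r' < r\<close> r'(3) r(2)] r' assms(3)
    by linarith
qed

lemma threshold_fun_le_const_coeff:
  assumes "t \<ge> 1" "a * t + b \<le> c"
  shows "threshold_fun a b t \<le> threshold_fun 0 c t"
  using mult_right_mono[OF assms(2), of "t - 1"] assms(1) unfolding threshold_fun_def by simp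

section \<open>Quantity-based price menus\<close>

lemma menu_price_eqI:
  assumes antitone: "\<And>q r. 1 \<le> q \<Longrightarrow> q \<le> r \<Longrightarrow> r < K \<Longrightarrow> sth r \<le> sth q"
    and j: "j \<in> {1..K}" "j = K \<or> sth j < s" "j = 1 \<or> s \<le> sth (j - 1)"
  shows "menu_price K sth price s = price j"
proof -
  let ?band = "\<lambda>q. q \<in> {1..K} \<and> (q = K \<or> sth q < s) \<and> (q = 1 \<or> s \<le> sth (q - 1))"
  have disjoint: "\<not> (?band q \<and> ?band q')" if "q < q'" for q q'
    using that antitone[of q "q' - 1"] by fastforce
  have "(THE q. ?band q) = j"
  proof (rule the_equality)
    show "?band j" using j by blast
    show "q = j" if "?band q" for q
      using that j disjoint[of q j] disjoint[of j q] by (meson linorder_neqE_nat)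
  qed
  thus ?thesis unfolding menu_price_def by simp
qed

text \<open>The band of s is the largest j whose lower end sth (j - 1) still lies above s.\<close>
lemma menu_band_exists:
  fixes K :: nat and sth :: "nat \<Rightarrow> real"
  assumes "K \<ge> 1"
  shows "\<exists>j\<in>{1..K}. (j = K \<or> sth j < s) \<and> (j = 1 \<or> s \<le> sth (j - 1))"
proof -
  define J where "J = {j\<in>{1..K}. j = 1 \<or> s \<le> sth (j - 1)}"
  have J: "finite J" "1 \<in> J" using assms unfolding J_def by auto
  define j where "j = Max J"
  have "j \<in> J" using J unfolding j_def by (intro Max_in) auto
  moreover have "j = K \<or> sth j < s"
  proof (rule ccontr)
    assume "\<not> (j = K \<or> sth j < s)"
    hence "j + 1 \<in> J" using \<open>j \<in> J\<close> unfolding J_def by auto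
    hence "j + 1 \<le> j" using J unfolding j_def by (intro Max_ge) auto
    thus False by simp
  qed
  ultimately show ?thesis unfolding J_def by blast
qed

text \<open>The surplus lies below its tangent at s = y - 1, whose slope A / y - P is zero, or
  nonnegative while s \<le> y - 1.\<close>
lemma ln_surplus_le:
  fixes A y P s :: real
  assumes "A \<ge> 0" "y > 0" "s > -1" "P \<le> A / y" "P = A / y \<or> s \<le> y - 1"
  shows "A * ln (1 + s) - P * s \<le> A * ln y - P * (y - 1)"
proof -
  have "ln (1 + s) - ln y \<le> (1 + s - y) / y" using ln_diff_le[of "1 + s" y] assms by simp
  hence "A * (ln (1 + s) - ln y) \<le> A * ((1 + s - y) / y)" by (rule mult_left_mono) fact
  moreover have "A * ((1 + s - y) / y) = A / y * (s - (y - 1))" using assms(2) by (simp add: field_simps)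
  ultimately have "A * ln (1 + s) \<le> A * ln y + A / y * (s - (y - 1))"
    by (simp add: right_diff_distrib)
  moreover have "A / y * (s - (y - 1)) \<le> P * (s - (y - 1))"
    using assms(4,5) mult_right_mono_neg[of P "A / y" "s - (y - 1)"] by auto
  ultimately show ?thesis by (simp add: algebra_simps)
qed

text \<open>Multiplying threshold_fun 0 (1/w) (z/w) by c w^2 gives exactly the difference of the two sides.\<close>
lemma surplus_at_lower_level_le:
  fixes c w z :: real
  assumes "c > 0" "w > 1" "z \<ge> w" "threshold_fun 0 (1/w) (z/w) \<ge> 0"
  shows "c * z^2 * ln w - c * w * (w - 1) \<le> c * z^2 * ln z - c * z * (z - 1)"
proof -
  have ln_z: "ln z = ln (z/w) + ln w" using assms(2,3) by (simp add: ln_div)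
  have "c * z^2 * ln z - c * z * (z - 1) - (c * z^2 * ln w - c * w * (w - 1))
      = c * (z^2 * ln (z/w) - z^2 + w^2 + z - w)"
    unfolding ln_z by (simp add: algebra_simps power2_eq_square)
  also have "\<dots> = c * (w^2 * threshold_fun 0 (1/w) (z/w))"
    using assms(2) unfolding threshold_fun_def by (simp add: field_simps power2_eq_square)
  also have "\<dots> \<ge> 0" using assms(1,4) by simp
  finally show ?thesis by linarith
qed

section \<open>Optimality of the menu\<close>

locale menu_setting =
  fixes S :: real and I :: nat and N :: "nat \<Rightarrow> nat" and th :: "nat \<Rightarrow> real"
  assumes S_pos: "S > 0"
    and I_ge: "I \<ge> 1"
    and N_pos: "\<forall>i\<in>{1..I}. N i > 0"
    and th_dec: "\<forall>i\<in>{1..I}. \<forall>j\<in>{1..I}. i < j \<longrightarrow> th i > th j"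
    and th_pos: "th I > 0"
begin

abbreviation K :: nat where "K \<equiv> effK S I N th"
abbreviation lm :: real where "lm \<equiv> lamstar S I N th"
abbreviation D :: real where "D \<equiv> S + (\<Sum>k=1..K. real (N k))"

definition x :: "nat \<Rightarrow> real" where "x i = sqrt (th i / lm)"

lemma th_less: "1 \<le> i \<Longrightarrow> i < j \<Longrightarrow> j \<le> I \<Longrightarrow> th j < th i"
  using th_dec by auto

lemma th_pos_all: "i \<in> {1..I} \<Longrightarrow> th i > 0"
  using th_less[of i I] th_pos by (cases "i = I") auto

lemma lam_one_less: "lam S N th 1 < th 1"
proof -
  define n r where "n = real (N 1)" and "r = sqrt (th 1)"
  have "n > 0" "r > 0" using N_pos th_pos_all I_ge unfolding n_def r_def by auto
  hence "n * r / (S + n) < r" "n * r / (S + n) \<ge> 0" using S_pos by (simp_all add: field_simps)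
  hence "(n * r / (S + n))^2 < r^2" by (simp add: power_strict_mono)
  moreover have "r^2 = th 1" using th_pos_all[of 1] I_ge unfolding r_def by simp
  ultimately show ?thesis unfolding lam_def n_def r_def by simp
qed

lemma K_bounds: "1 \<le> K" "K \<le> I" and lm_less_th_K: "lm < th K"
proof -
  let ?A = "{k \<in> {1..I}. th k > lam S N th k}"
  have "K \<in> ?A" unfolding effK_def using lam_one_less I_ge by (intro Max_in) auto
  thus "1 \<le> K" "K \<le> I" "lm < th K" unfolding lamstar_def by auto
qed

lemma D_pos: "D > 0"
  using S_pos by (simp add: sum_nonneg add_pos_nonneg)

lemma sqrt_lm: "sqrt lm = (\<Sum>i=1..K. real (N i) * sqrt (th i)) / D"
  and lm_pos: "lm > 0"
proof -
  have "0 < real (N 1) * sqrt (th 1)" using N_pos th_pos_all I_ge by auto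
  also have "\<dots> \<le> (\<Sum>i=1..K. real (N i) * sqrt (th i))"
    using K_bounds th_pos_all by (intro member_le_sum) (auto simp: less_imp_le)
  finally have pos: "(\<Sum>i=1..K. real (N i) * sqrt (th i)) > 0" .
  thus "sqrt lm = (\<Sum>i=1..K. real (N i) * sqrt (th i)) / D"
    using D_pos unfolding lamstar_def lam_def by simp
  hence "sqrt lm > 0" using pos D_pos by simp
  thus "lm > 0" by simp
qed

lemma th_eq: "i \<in> {1..I} \<Longrightarrow> th i = lm * (x i)^2"
  using th_pos_all[of i] lm_pos unfolding x_def by simp

lemma pstar_eq:
  assumes "i \<in> {1..I}"
  shows "pstar S I N th i = lm * x i"
proof -
  have "th i * lm = (lm * x i)^2" using th_eq[OF assms] by (simp add: power2_eq_square)
  moreover have "lm * x i \<ge> 0" using lm_pos th_pos_all[OF assms] unfolding x_def by simp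
  ultimately show ?thesis unfolding pstar_def by simp
qed

lemma sstar_eq: "sstar S I N th i = x i - 1"
  unfolding sstar_def x_def ..

lemma x_less: "1 \<le> i \<Longrightarrow> i < j \<Longrightarrow> j \<le> I \<Longrightarrow> x j < x i"
  using th_less lm_pos unfolding x_def by (simp add: divide_strict_right_mono)

lemma x_gt_one: "i \<in> {1..K} \<Longrightarrow> x i > 1"
proof -
  assume "i \<in> {1..K}"
  hence "th K \<le> th i" using th_less[of i K] K_bounds by (cases "i = K") auto
  thus "x i > 1" using lm_less_th_K lm_pos unfolding x_def by simp
qed

text \<open>The allocations s*_i = x i - 1 exhaust the capacity S.\<close>
lemma capacity_identity: "(\<Sum>k=1..K. real (N k) * x k) = D"
proof -
  have "x k = sqrt (th k) / sqrt lm" for k unfolding x_def by (simp add: real_sqrt_divide)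
  hence "(\<Sum>k=1..K. real (N k) * x k) = (\<Sum>k=1..K. real (N k) * sqrt (th k)) / sqrt lm"
    by (simp add: sum_divide_distrib)
  also have "\<dots> = D" using sqrt_lm lm_pos D_pos by (simp add: field_simps)
  finally show ?thesis .
qed

lemma partial_capacity_le:
  assumes "1 \<le> q" "q < K"
  shows "(\<Sum>k=1..q. real (N k)) * x q + real (N (q+1)) * x (q+1) \<le> D"
proof -
  have "(\<Sum>k=1..q. real (N k)) * x q = (\<Sum>k=1..q. real (N k) * x q)"
    by (simp add: sum_distrib_right)
  also have "\<dots> \<le> (\<Sum>k=1..q. real (N k) * x k)"
  proof (intro sum_mono mult_left_mono)
    show "x q \<le> x k" if "k \<in> {1..q}" for k
      using that x_less[of k q] assms K_bounds by (cases "k = q") auto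
  qed simp
  finally have "(\<Sum>k=1..q. real (N k)) * x q + real (N (q+1)) * x (q+1)
      \<le> (\<Sum>k=1..q+1. real (N k) * x k)" by simp
  also have "\<dots> \<le> (\<Sum>k=1..K. real (N k) * x k)"
  proof (rule sum_mono2)
    show "0 \<le> real (N k) * x k" if "k \<in> {1..K} - {1..q+1}" for k
      using that x_gt_one[of k] by simp
  qed (use assms in auto)
  finally show ?thesis unfolding capacity_identity .
qed

abbreviation coef_a :: "nat \<Rightarrow> real" where "coef_a q \<equiv> (\<Sum>k=1..q. real (N k)) / D"
abbreviation coef_b :: "nat \<Rightarrow> real" where "coef_b q \<equiv> real (N (q+1)) / D"

lemma threq_eq: "threq S N K q = threshold_fun (coef_a q) (coef_b q)"
  unfolding threq_def threshold_fun_def by (intro ext) (simp add: add_divide_distrib algebra_simps)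

lemma coef_bounds:
  assumes "q \<in> {1..K-1}"
  shows "coef_a q \<ge> 0" "coef_b q \<ge> 0" "coef_a q + coef_b q < 1"
proof -
  have "coef_a q + coef_b q = (\<Sum>k=1..q+1. real (N k)) / D" by (simp add: add_divide_distrib)
  also have "\<dots> \<le> (\<Sum>k=1..K. real (N k)) / D"
    using assms D_pos by (intro divide_right_mono sum_mono2) auto
  also have "\<dots> < 1" using D_pos S_pos by simp
  finally show "coef_a q + coef_b q < 1" .
  show "coef_a q \<ge> 0" "coef_b q \<ge> 0" using D_pos by (simp_all add: sum_nonneg)
qed

lemma threq_unique_root: "q \<in> {1..K-1} \<Longrightarrow> \<exists>!t. t > 1 \<and> threq S N K q t = 0"
  unfolding threq_eq using coef_bounds threshold_fun_unique_root by blast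

lemma tq_root: "q \<in> {1..K-1} \<Longrightarrow> tq S N K q > 1 \<and> threshold_fun (coef_a q) (coef_b q) (tq S N K q) = 0"
  using theI'[OF threq_unique_root] unfolding tq_def threq_eq by blast

text \<open>The left-hand side is the surplus of a group-i user buying x j - 1, the top of the cheaper
  band j.\<close>
lemma no_upward_deviation:
  assumes ratios: "\<forall>q\<in>{1..K-1}. sqrt (th q / th (q+1)) \<ge> tq S N K q"
    and ij: "1 \<le> i" "i < j" "j \<le> K"
  shows "th i * ln (x j) - lm * x j * (x j - 1) \<le> th i * ln (x i) - lm * x i * (x i - 1)"
proof -
  define q where "q = j - 1"
  have q: "q \<in> {1..K-1}" "j = q + 1" "i \<le> q" using ij unfolding q_def by auto
  have xj: "x j > 1" "x j \<le> x i" using x_gt_one x_less[of i j] ij K_bounds by auto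
  define t where "t = x q / x j"
  have "sqrt (th q / th (q+1)) = t"
    unfolding t_def x_def q(2)[symmetric] using lm_pos by (simp add: real_sqrt_divide)
  hence tq_le: "tq S N K q \<le> t" using ratios q(1) by auto
  hence "t > 1" using tq_root[OF q(1)] by linarith
  have "threshold_fun (coef_a q) (coef_b q) t \<ge> 0"
    using threshold_fun_nonneg_beyond[of _ _ "tq S N K q" t] coef_bounds[OF q(1)] tq_root[OF q(1)] tq_le
    by auto
  moreover have "coef_a q * t + coef_b q \<le> 1 / x j"
  proof -
    have frac: "a/d * (u/v) + b/d = (a*u + b*v) / (d*v)" if "d > 0" "v > 0" for a b d u v :: real
      using that by (simp add: field_simps)
    have "coef_a q * t + coef_b q
        = ((\<Sum>k=1..q. real (N k)) * x q + real (N (q+1)) * x (q+1)) / (D * x j)"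
      unfolding t_def q(2) using frac xj D_pos q(2) by simp
    also have "\<dots> \<le> D / (D * x j)"
      using partial_capacity_le[of q] q xj D_pos by (intro divide_right_mono) auto
    finally show ?thesis using D_pos by simp
  qed
  ultimately have "threshold_fun 0 (1 / x j) t \<ge> 0"
    using threshold_fun_le_const_coeff[of t] \<open>t > 1\<close> by fastforce
  moreover have "t \<le> x i / x j"
    unfolding t_def using x_less[of i q] q ij K_bounds xj by (cases "i = q") (auto intro: divide_right_mono)
  ultimately have "threshold_fun 0 (1 / x j) (x i / x j) \<ge> 0"
    using threshold_fun_nonneg_beyond[of 0 "1 / x j" t] \<open>t > 1\<close> xj by auto
  from surplus_at_lower_level_le[OF lm_pos xj this]
  show ?thesis using th_eq[of i] ij K_bounds by (simp add: mult.assoc)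
qed

text \<open>Band q of the menu is (x (q+1) - 1, x q - 1], so that s*_q is the top of its own band.\<close>
definition thresholds :: "nat \<Rightarrow> real" where "thresholds q = x (q+1) - 1"

definition menu :: "real \<Rightarrow> real" where "menu = menu_price K thresholds (pstar S I N th)"

lemma thresholds_less: "1 \<le> q \<Longrightarrow> q < r \<Longrightarrow> r < K \<Longrightarrow> thresholds r < thresholds q"
  unfolding thresholds_def using x_less K_bounds by simp

lemma thresholds_pos: "q \<in> {1..K-1} \<Longrightarrow> thresholds q > 0"
  unfolding thresholds_def using x_gt_one[of "q+1"] K_bounds by force

lemma menu_in_band:
  assumes "j \<in> {1..K}" "j = K \<or> x (j+1) - 1 < s" "j = 1 \<or> s \<le> x j - 1"
  shows "menu s = lm * x j"
proof -
  have "menu s = pstar S I N th j" unfolding menu_def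
  proof (rule menu_price_eqI)
    show "thresholds r \<le> thresholds q" if "1 \<le> q" "q \<le> r" "r < K" for q r
      using thresholds_less[of q r] that by (cases "q = r") auto
  qed (use assms in \<open>auto simp: thresholds_def\<close>)
  thus ?thesis using pstar_eq assms(1) K_bounds by auto
qed

lemma menu_band_cases:
  obtains j where "j \<in> {1..K}" "menu s = lm * x j" "j = 1 \<or> s \<le> x j - 1"
proof -
  obtain j where j: "j \<in> {1..K}" "j = K \<or> thresholds j < s" "j = 1 \<or> s \<le> thresholds (j - 1)"
    using menu_band_exists[of K thresholds s] K_bounds by blast
  hence "j = 1 \<or> s \<le> x j - 1" unfolding thresholds_def by auto
  thus thesis using that j menu_in_band[of j s] unfolding thresholds_def by auto
qed

lemma menu_at_sstar:
  assumes "i \<in> {1..K}"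
  shows "menu (x i - 1) = lm * x i"
proof (rule menu_in_band[OF assms])
  show "i = K \<or> x (i+1) - 1 < x i - 1" using x_less[of i "i+1"] assms K_bounds by force
qed simp

lemma surplus_le_at_sstar:
  assumes ratios: "\<forall>q\<in>{1..K-1}. sqrt (th q / th (q+1)) \<ge> tq S N K q"
    and i: "i \<in> {1..K}" and s: "s \<ge> 0"
  shows "surplus (th i) menu s \<le> surplus (th i) menu (x i - 1)"
proof -
  have th_i: "th i = lm * (x i)^2" "th i > 0" using th_eq th_pos_all i K_bounds by auto
  have x_i: "x i > 1" using x_gt_one i .
  have opt: "surplus (th i) menu (x i - 1) = th i * ln (x i) - lm * x i * (x i - 1)"
    unfolding surplus_def using menu_at_sstar[OF i] by simp
  have own: "th i * ln (1 + s) - lm * x i * s \<le> th i * ln (x i) - lm * x i * (x i - 1)"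
    using ln_surplus_le[of "th i" "x i" s "lm * x i"] th_i x_i s by (simp add: power2_eq_square)
  obtain j where j: "j \<in> {1..K}" "menu s = lm * x j" "j = 1 \<or> s \<le> x j - 1"
    by (rule menu_band_cases)
  have surplus_s: "surplus (th i) menu s = th i * ln (1 + s) - lm * x j * s"
    unfolding surplus_def j(2) ..
  show ?thesis
  proof (cases "j \<le> i")
    case True
    hence "x i \<le> x j" using x_less[of j i] i j(1) K_bounds by (cases "j = i") auto
    hence "lm * x i * s \<le> lm * x j * s" using lm_pos s by (simp add: mult_right_mono)
    thus ?thesis using own surplus_s opt by linarith
  next
    case False
    have x_j: "x j > 1" using x_gt_one j(1) .
    have "th j < th i" using th_less[of i j] False i j(1) K_bounds by auto
    hence "lm * x j \<le> th i / x j"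
      using th_eq[of j] j(1) K_bounds x_j by (simp add: field_simps power2_eq_square)
    hence "th i * ln (1 + s) - lm * x j * s \<le> th i * ln (x j) - lm * x j * (x j - 1)"
      using ln_surplus_le[of "th i" "x j" s "lm * x j"] th_i(2) x_j s j(3) False i by auto
    also have "\<dots> \<le> th i * ln (x i) - lm * x i * (x i - 1)"
      using no_upward_deviation[OF ratios] False i j(1) by auto
    finally show ?thesis using surplus_s opt by simp
  qed
qed

lemma menu_implements_differentiation:
  assumes ratios: "\<forall>q\<in>{1..K-1}. sqrt (th q / th (q+1)) \<ge> tq S N K q"
  shows "\<exists>sth :: nat \<Rightarrow> real.
           (\<forall>q\<in>{1..K - 1}. \<forall>r\<in>{1..K - 1}. q < r \<longrightarrow> sth q > sth r)
         \<and> (\<forall>q\<in>{1..K - 1}. sth q > 0)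
         \<and> (let p = menu_price K sth (pstar S I N th) in
              (\<forall>i\<in>{1..K}.
                  sstar S I N th i \<ge> 0
                \<and> (\<forall>s\<ge>0. surplus (th i) p s \<le> surplus (th i) p (sstar S I N th i))
                \<and> p (sstar S I N th i) = pstar S I N th i)
            \<and> (\<Sum>i=1..K. real (N i) * p (sstar S I N th i) * sstar S I N th i)
              = (\<Sum>i=1..K. real (N i) * pstar S I N th i * sstar S I N th i))"
proof (intro exI[of _ thresholds] conjI)
  show "\<forall>q\<in>{1..K-1}. \<forall>r\<in>{1..K-1}. q < r \<longrightarrow> thresholds q > thresholds r"
    using thresholds_less by force
  show "\<forall>q\<in>{1..K-1}. thresholds q > 0" using thresholds_pos by blast
  have price: "menu (sstar S I N th i) = pstar S I N th i" if "i \<in> {1..K}" for i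
    using menu_at_sstar[OF that] pstar_eq[of i] that K_bounds unfolding sstar_eq by auto
  have "(\<forall>i\<in>{1..K}. sstar S I N th i \<ge> 0
        \<and> (\<forall>s\<ge>0. surplus (th i) menu s \<le> surplus (th i) menu (sstar S I N th i))
        \<and> menu (sstar S I N th i) = pstar S I N th i)"
    using x_gt_one surplus_le_at_sstar[OF ratios] price unfolding sstar_eq by fastforce
  moreover have "(\<Sum>i=1..K. real (N i) * menu (sstar S I N th i) * sstar S I N th i)
      = (\<Sum>i=1..K. real (N i) * pstar S I N th i * sstar S I N th i)"
    using price by (intro sum.cong) auto
  ultimately show "let p = menu_price K thresholds (pstar S I N th) in
      (\<forall>i\<in>{1..K}. sstar S I N th i \<ge> 0
        \<and> (\<forall>s\<ge>0. surplus (th i) p s \<le> surplus (th i) p (sstar S I N th i))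
        \<and> p (sstar S I N th i) = pstar S I N th i)
    \<and> (\<Sum>i=1..K. real (N i) * p (sstar S I N th i) * sstar S I N th i)
      = (\<Sum>i=1..K. real (N i) * pstar S I N th i * sstar S I N th i)"
    unfolding Let_def menu_def by blast
qed

end

theorem theorem6:
  fixes S :: real and I :: nat and N :: "nat \<Rightarrow> nat" and th :: "nat \<Rightarrow> real"
  assumes S_pos: "S > 0"
    and I_ge: "I \<ge> 1"
    and N_pos: "\<forall>i\<in>{1..I}. N i > 0"
    and th_dec: "\<forall>i\<in>{1..I}. \<forall>j\<in>{1..I}. i < j \<longrightarrow> th i > th j"
    and th_pos: "th I > 0"
  shows "(\<forall>q\<in>{1..effK S I N th - 1}.
            \<exists>!t. t > 1 \<and> threq S N (effK S I N th) q t = 0)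
       \<and> ((\<forall>q\<in>{1..effK S I N th - 1}.
              sqrt (th q / th (q+1)) \<ge> tq S N (effK S I N th) q)
          \<longrightarrow> (\<exists>sth :: nat \<Rightarrow> real.
                 (\<forall>q\<in>{1..effK S I N th - 1}. \<forall>r\<in>{1..effK S I N th - 1}. q < r \<longrightarrow> sth q > sth r)
               \<and> (\<forall>q\<in>{1..effK S I N th - 1}. sth q > 0)
               \<and> (let K = effK S I N th;
                      p = menu_price K sth (pstar S I N th) in
                    (\<forall>i\<in>{1..K}.
                        sstar S I N th i \<ge> 0
                      \<and> (\<forall>s\<ge>0. surplus (th i) p s \<le> surplus (th i) p (sstar S I N th i))
                      \<and> p (sstar S I N th i) = pstar S I N th i)
                  \<and> (\<Sum>i=1..K. real (N i) * p (sstar S I N th i) * sstar S I N th i)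
                    = (\<Sum>i=1..K. real (N i) * pstar S I N th i * sstar S I N th i))))"
proof -
  interpret menu_setting S I N th using assms by unfold_locales
  have roots: "\<forall>q\<in>{1..K - 1}. \<exists>!t. t > 1 \<and> threq S N K q t = 0"
    using threq_unique_root by blast
  show ?thesis
    unfolding Let_def by (intro conjI impI roots menu_implements_differentiation[unfolded Let_def])
qed

end
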